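(* Let $\xi$ take values $0$ and $2$ with probability $1/2$ each, let $k \ge 1$, and let $p \in (0,1)$. Let $F_n$ be the Boolean function computed at the root of $T_n$, for odd $n$. Then $F_n$ converges in distribution, as $n \to \infty$ along odd $n$, to a random Boolean function $F_\infty$ of $x_1,\dots,x_k$. Moreover, every Boolean function of $x_1,\dots,x_k$ has positive probability under the law of $F_\infty$.
   Context: $T_n$ is a Galton--Watson tree with offspring distribution $\xi$ conditioned to have exactly $n$ nodes; it is a binary tree, defined for odd $n$. Each internal node is independently an AND-node with probability $p$ or an OR-node with probability $1-p$. Each leaf independently receives a literal chosen uniformly among the $2k$ literals $x_1,\dots,x_k,\bar x_1,\dots,\bar x_k$. The value of a leaf is the Boolean function given by its literal. An AND-node (resp. OR-node) takes the Boolean AND (resp. OR) of the functions at its two children. The values thus lie in the finite set of Boolean functions of $x_1,\dots,x_k$. *)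

theory Defs
  imports "HOL-Probability.Probability"
begin

text \<open>Plane trees in the support of the offspring law xi (0 or 2 children).\<close>
datatype fbt = Lf | Nd fbt fbt

fun nodes :: "fbt \<Rightarrow> nat" where
  "nodes Lf = 1"
| "nodes (Nd l r) = 1 + nodes l + nodes r"

definition xi :: "nat \<Rightarrow> real" where
  "xi j = (if j = 0 \<or> j = 2 then 1/2 else 0)"

fun gw_weight :: "fbt \<Rightarrow> real" where
  "gw_weight Lf = xi 0"
| "gw_weight (Nd l r) = xi 2 * gw_weight l * gw_weight r"

definition T :: "nat \<Rightarrow> fbt pmf" where
  "T n = embed_pmf (\<lambda>t. if nodes t = n
        then gw_weight t / (\<Sum>s\<in>{s. nodes s = n}. gw_weight s) else 0)"

text \<open>A Boolean function of x_1..x_k is represented by its truth table: the set of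
  assignments (an assignment = the set of indices in {0..<k} of variables set true)
  on which it is true.\<close>
definition boolfuns :: "nat \<Rightarrow> nat set set set" where
  "boolfuns k = Pow (Pow {..<k})"

text \<open>Literal (i, True) is x_(i+1), (i, False) its negation.\<close>
definition lit :: "nat \<Rightarrow> nat \<times> bool \<Rightarrow> nat set set" where
  "lit k l = {A \<in> Pow {..<k}. (fst l \<in> A) = snd l}"

fun val_pmf :: "nat \<Rightarrow> real \<Rightarrow> fbt \<Rightarrow> nat set set pmf" where
  "val_pmf k p Lf = map_pmf (lit k) (pmf_of_set ({..<k} \<times> (UNIV :: bool set)))"
| "val_pmf k p (Nd l r) =
     bind_pmf (bernoulli_pmf p) (\<lambda>isand.
     bind_pmf (val_pmf k p l) (\<lambda>f.
     bind_pmf (val_pmf k p r) (\<lambda>g.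
     return_pmf (if isand then f \<inter> g else f \<union> g))))"

definition F_law :: "nat \<Rightarrow> real \<Rightarrow> nat \<Rightarrow> nat set set pmf" where
  "F_law k p n = bind_pmf (T n) (val_pmf k p)"

end

theory Submission
  imports Defs "HOL-Computational_Algebra.Formal_Power_Series" "HOL-Real_Asymp.Real_Asymp"
begin

text \<open>Write \<open>\<mu>\<^sub>n\<close> for the law of \<open>F\<^sub>2\<^sub>n\<^sub>+\<^sub>1\<close>. Given its size, the tree is uniform among the
  Catalan-many trees with \<open>n\<close> internal nodes, so for \<open>T\<^sub>2\<^sub>n\<^sub>+\<^sub>3\<close> the left subtree has \<open>i\<close>
  internal nodes with probability \<open>a\<^sub>n\<^sub>,\<^sub>i = C\<^sub>i C\<^sub>n\<^sub>-\<^sub>i / C\<^sub>n\<^sub>+\<^sub>1\<close>, and given that the two subtrees are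
  independent uniform trees of their sizes. Hence \<open>\<mu>\<^sub>n\<^sub>+\<^sub>1 = \<Sum>\<^sub>i a\<^sub>n\<^sub>,\<^sub>i \<Phi>(\<mu>\<^sub>i, \<mu>\<^sub>n\<^sub>-\<^sub>i)\<close>, where \<open>\<Phi>\<close> is the
  law of a random gate applied to independent inputs. As \<open>n \<rightarrow> \<infinity>\<close>, \<open>a\<^sub>n\<^sub>,\<^sub>i \<rightarrow> C\<^sub>i / 4\<^sup>i\<^sup>+\<^sup>1\<close>, and
  these limits sum to \<open>1/2\<close>: asymptotically one subtree is small and the other one large.

  An OR-gate with a constantly true input outputs the constantly true function, so \<open>\<Phi>(\<cdot>, v)\<close>
  contracts the \<open>\<ell>\<^sub>1\<close> distance by the factor \<open>1 - (1 - p) v(true)\<close>. Feeding the contraction coming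
  from the term \<open>i = 1\<close> into the recursion shows that the diameter of \<open>{\<mu>\<^sub>n | n \<ge> N}\<close> tends to
  \<open>0\<close>, so \<open>\<mu>\<^sub>n\<close> converges. Every Boolean function is a disjunction of minterms, hence is computed
  with positive probability by some fixed tree, and it keeps positive probability in the limit as
  the output of an AND-gate whose other, large, input computes the constantly true function.\<close>

section \<open>Trees and Catalan numbers\<close>

definition trees :: "nat \<Rightarrow> fbt set" where
  "trees n = {t. nodes t = 2 * n + 1}"

definition catalan :: "nat \<Rightarrow> nat" where
  "catalan n = card (trees n)"

lemma nodes_odd: "odd (nodes t)"
  by (induction t) auto

lemma nodes_pos [simp]: "0 < nodes t"
  by (cases t) auto

lemma finite_nodes_le: "finite {t. nodes t \<le> m}"
proof (induction m)
  case 0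
  have "{t. nodes t \<le> 0} = {}"
    using nodes_pos by (metis (mono_tags) Collect_empty_eq le_zero_eq less_irrefl)
  then show ?case by (metis finite.emptyI)
next
  case (Suc m)
  let ?small = "{t. nodes t \<le> m}"
  have "{t. nodes t \<le> Suc m} \<subseteq> insert Lf ((\<lambda>(l, r). Nd l r) ` (?small \<times> ?small))"
  proof
    fix t assume "t \<in> {t. nodes t \<le> Suc m}"
    then show "t \<in> insert Lf ((\<lambda>(l, r). Nd l r) ` (?small \<times> ?small))"
      by (cases t) force+
  qed
  moreover have "finite (insert Lf ((\<lambda>(l, r). Nd l r) ` (?small \<times> ?small)))"
    using Suc by simp
  ultimately show ?case by (rule finite_subset)
qed

lemma finite_trees: "finite (trees n)"
  unfolding trees_def by (rule finite_subset[OF _ finite_nodes_le[of "2 * n + 1"]]) auto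

lemma trees_0: "trees 0 = {Lf}"
proof -
  have "nodes t = 1 \<longleftrightarrow> t = Lf" for t
    by (cases t) auto
  then show ?thesis unfolding trees_def by auto
qed

lemma trees_Suc: "trees (Suc n) = (\<lambda>(i, l, r). Nd l r) ` (SIGMA i:{..n}. trees i \<times> trees (n - i))"
proof
  show "(\<lambda>(i, l, r). Nd l r) ` (SIGMA i:{..n}. trees i \<times> trees (n - i)) \<subseteq> trees (Suc n)"
    by (auto simp: trees_def)
next
  show "trees (Suc n) \<subseteq> (\<lambda>(i, l, r). Nd l r) ` (SIGMA i:{..n}. trees i \<times> trees (n - i))"
  proof
    fix t assume t: "t \<in> trees (Suc n)"
    then obtain l r where lr: "t = Nd l r" by (cases t) (auto simp: trees_def)
    obtain i where i: "nodes l = 2 * i + 1" using nodes_odd[of l] by (metis oddE)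
    obtain j where j: "nodes r = 2 * j + 1" using nodes_odd[of r] by (metis oddE)
    have "i + j = n" using t lr i j by (simp add: trees_def)
    then have "(i, l, r) \<in> (SIGMA i:{..n}. trees i \<times> trees (n - i))"
      using i j by (auto simp: trees_def)
    then show "t \<in> (\<lambda>(i, l, r). Nd l r) ` (SIGMA i:{..n}. trees i \<times> trees (n - i))"
      using lr by force
  qed
qed

lemma sum_trees_Suc:
  fixes G :: "fbt \<Rightarrow> 'a::comm_monoid_add"
  shows "(\<Sum>t\<in>trees (Suc n). G t) = (\<Sum>i\<le>n. \<Sum>l\<in>trees i. \<Sum>r\<in>trees (n - i). G (Nd l r))"
proof -
  have inj: "inj_on (\<lambda>(i, l, r). Nd l r) (SIGMA i:{..n}. trees i \<times> trees (n - i))"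
    by (auto simp: inj_on_def trees_def)
  have "(\<Sum>t\<in>trees (Suc n). G t)
      = (\<Sum>(i, lr)\<in>(SIGMA i:{..n}. trees i \<times> trees (n - i)). G (Nd (fst lr) (snd lr)))"
    unfolding trees_Suc sum.reindex[OF inj] by (intro sum.cong refl) auto
  also have "\<dots> = (\<Sum>i\<le>n. \<Sum>lr\<in>trees i \<times> trees (n - i). G (Nd (fst lr) (snd lr)))"
    by (subst sum.Sigma) (auto simp: finite_trees)
  also have "\<dots> = (\<Sum>i\<le>n. \<Sum>l\<in>trees i. \<Sum>r\<in>trees (n - i). G (Nd l r))"
    by (simp add: sum.cartesian_product split_def)
  finally show ?thesis .
qed

lemma catalan_0: "catalan 0 = 1"
  by (simp add: catalan_def trees_0)

lemma catalan_Suc: "catalan (Suc n) = (\<Sum>i\<le>n. catalan i * catalan (n - i))"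
  using sum_trees_Suc[of "\<lambda>_. 1::nat" n] by (simp add: catalan_def)

lemma catalan_pos: "catalan n > 0"
proof (induction n)
  case (Suc n)
  have "catalan 0 * catalan n \<le> (\<Sum>i\<le>n. catalan i * catalan (n - i))"
    by (rule member_le_sum[where f = "\<lambda>i. catalan i * catalan (n - i)" and i = 0, simplified]) auto
  then show ?case using Suc by (simp add: catalan_Suc catalan_0)
qed (simp add: catalan_0)

lemma trees_nonempty: "trees n \<noteq> {}"
  using catalan_pos[of n] by (auto simp: catalan_def)

definition catalan_fps :: "real fps" where
  "catalan_fps = Abs_fps (\<lambda>n. real (catalan n))"

lemma catalan_fps_eq: "catalan_fps = 1 + fps_X * catalan_fps ^ 2"
proof (rule fps_ext)
  fix n show "fps_nth catalan_fps n = fps_nth (1 + fps_X * catalan_fps ^ 2) n"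
  proof (cases n)
    case (Suc m)
    have "fps_nth (catalan_fps ^ 2) m = (\<Sum>i=0..m. real (catalan i) * real (catalan (m - i)))"
      by (simp add: power2_eq_square fps_mult_nth catalan_fps_def)
    also have "\<dots> = real (catalan (Suc m))"
      by (simp add: catalan_Suc atLeast0AtMost)
    finally show ?thesis using Suc by (simp add: catalan_fps_def)
  qed (simp add: catalan_fps_def catalan_0)
qed

text \<open>Differentiating the quadratic equation and using \<open>(1 - 2 X C)\<^sup>2 = 1 - 4 X\<close> gives a
  linear differential equation for \<open>C\<close>, whence a first-order recurrence for its coefficients.\<close>

lemma catalan_fps_ode:
  "fps_X * (1 - 4 * fps_X) * fps_deriv catalan_fps = 1 - catalan_fps + 2 * fps_X * catalan_fps"
proof -
  let ?C = catalan_fps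
  define E where "E = 1 - 2 * fps_X * ?C"
  have XC: "fps_X * ?C ^ 2 = ?C - 1"
    by (metis catalan_fps_eq add_diff_cancel_left')
  have "fps_deriv ?C = ?C ^ 2 + 2 * fps_X * ?C * fps_deriv ?C"
    by (subst catalan_fps_eq) (simp add: power2_eq_square algebra_simps)
  then have E_deriv: "E * fps_deriv ?C = ?C ^ 2"
    unfolding E_def by (simp add: algebra_simps)
  have E_sq: "E ^ 2 = 1 - 4 * fps_X"
  proof -
    have "E ^ 2 = 1 - 4 * fps_X * ?C + 4 * (fps_X * ?C ^ 2) * fps_X"
      unfolding E_def by (simp add: power2_eq_square algebra_simps)
    then show ?thesis by (simp add: XC algebra_simps)
  qed
  have "fps_X * (1 - 4 * fps_X) * fps_deriv ?C = fps_X * E ^ 2 * fps_deriv ?C"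
    by (simp only: E_sq)
  also have "\<dots> = fps_X * E * (E * fps_deriv ?C)"
    by (simp add: power2_eq_square algebra_simps)
  also have "\<dots> = E * (fps_X * ?C ^ 2)"
    by (simp add: E_deriv algebra_simps)
  also have "\<dots> = (1 - 2 * fps_X * ?C) * (?C - 1)"
    by (simp add: XC E_def)
  also have "\<dots> = ?C - 1 - 2 * (fps_X * ?C ^ 2) + 2 * fps_X * ?C"
    by (simp add: power2_eq_square algebra_simps)
  also have "\<dots> = 1 - ?C + 2 * fps_X * ?C"
    by (simp add: XC algebra_simps)
  finally show ?thesis .
qed

lemma catalan_Suc_ratio: "real (n + 2) * real (catalan (Suc n)) = real (4 * n + 2) * real (catalan n)"
proof -
  have "fps_nth (fps_X * (1 - 4 * fps_X) * fps_deriv catalan_fps) (Suc n)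
      = fps_nth (1 - catalan_fps + 2 * fps_X * catalan_fps) (Suc n)"
    by (simp add: catalan_fps_ode)
  then show ?thesis
    by (cases n) (auto simp: algebra_simps catalan_fps_def)
qed

section \<open>Sizes of the subtrees of the root\<close>

text \<open>\<open>split_prob n i\<close> is the probability that a uniform tree with \<open>n + 1\<close> internal nodes has
  \<open>i\<close> internal nodes in its left subtree.\<close>

definition split_prob :: "nat \<Rightarrow> nat \<Rightarrow> real" where
  "split_prob n i = real (catalan i) * real (catalan (n - i)) / real (catalan (Suc n))"

definition split_limit :: "nat \<Rightarrow> real" where
  "split_limit i = real (catalan i) / 4 ^ Suc i"

lemma split_prob_nonneg: "0 \<le> split_prob n i"
  by (simp add: split_prob_def)

lemma split_prob_sym: "i \<le> n \<Longrightarrow> split_prob n (n - i) = split_prob n i"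
  by (simp add: split_prob_def)

lemma catalan_ratio_tendsto: "(\<lambda>n. real (catalan n) / real (catalan (Suc n))) \<longlonglongrightarrow> 1 / 4"
proof -
  have "real (catalan n) / real (catalan (Suc n)) = real (n + 2) / real (4 * n + 2)" for n
    using catalan_Suc_ratio[of n] catalan_pos[of n] catalan_pos[of "Suc n"]
    by (simp add: field_simps)
  moreover have "(\<lambda>n::nat. real (n + 2) / real (4 * n + 2)) \<longlonglongrightarrow> 1 / 4"
    by real_asymp
  ultimately show ?thesis by simp
qed

lemma LIMSEQ_shift_back: "f \<longlonglongrightarrow> l \<Longrightarrow> (\<lambda>n. f (n - k)) \<longlonglongrightarrow> l"
  by (rule LIMSEQ_offset[where k = k]) simp

lemma catalan_shifted_ratio_tendsto:
  "(\<lambda>n. real (catalan (n - i)) / real (catalan (Suc n))) \<longlonglongrightarrow> (1 / 4) ^ Suc i"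
proof (induction i)
  case 0
  then show ?case using catalan_ratio_tendsto by simp
next
  case (Suc i)
  have "(\<lambda>n. real (catalan (n - Suc i)) / real (catalan (Suc (n - Suc i)))
           * (real (catalan (n - i)) / real (catalan (Suc n)))) \<longlonglongrightarrow> 1 / 4 * (1 / 4) ^ Suc i"
    by (intro tendsto_mult Suc LIMSEQ_shift_back catalan_ratio_tendsto)
  moreover have "\<forall>\<^sub>F n in sequentially.
      real (catalan (n - Suc i)) / real (catalan (Suc (n - Suc i)))
        * (real (catalan (n - i)) / real (catalan (Suc n)))
      = real (catalan (n - Suc i)) / real (catalan (Suc n))"
  proof (rule eventually_sequentiallyI[of "Suc i"])
    fix n assume "Suc i \<le> n"
    then have "Suc (n - Suc i) = n - i" by simp
    then show "real (catalan (n - Suc i)) / real (catalan (Suc (n - Suc i)))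
        * (real (catalan (n - i)) / real (catalan (Suc n)))
      = real (catalan (n - Suc i)) / real (catalan (Suc n))"
      using catalan_pos[of "n - i"] by simp
  qed
  ultimately have "(\<lambda>n. real (catalan (n - Suc i)) / real (catalan (Suc n)))
      \<longlonglongrightarrow> 1 / 4 * (1 / 4) ^ Suc i"
    by (rule Lim_transform_eventually)
  then show ?case by simp
qed

lemma split_prob_tendsto: "(\<lambda>n. split_prob n i) \<longlonglongrightarrow> split_limit i"
proof -
  have "(\<lambda>n. real (catalan i) * (real (catalan (n - i)) / real (catalan (Suc n))))
          \<longlonglongrightarrow> real (catalan i) * (1 / 4) ^ Suc i"
    by (intro tendsto_mult tendsto_const catalan_shifted_ratio_tendsto)
  then show ?thesis
    by (simp add: split_prob_def split_limit_def power_one_over)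
qed

lemma split_limit_pos: "0 < split_limit i"
  using catalan_pos[of i] by (simp add: split_limit_def)

lemma split_limit_Suc: "(2 * n + 4) * split_limit (Suc n) = (2 * n + 1) * split_limit n"
proof -
  have "real (n + 2) * real (catalan (Suc n)) = real (4 * n + 2) * real (catalan n)"
    by (rule catalan_Suc_ratio)
  then have "real (catalan (Suc n)) * (2 * n + 4) = real (catalan n) * (2 * n + 1) * 4"
    by (simp add: algebra_simps)
  then show ?thesis
    unfolding split_limit_def power_Suc by (simp add: field_simps)
qed

lemma sum_split_limit: "(\<Sum>i\<le>M. split_limit i) = 1 / 2 - 2 * (M + 2) * split_limit (Suc M)"
proof (induction M)
  case 0
  then show ?case by (simp add: split_limit_def catalan_0 catalan_Suc)
next
  case (Suc M)
  then show ?case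
    using split_limit_Suc[of "Suc M"] by (simp add: algebra_simps)
qed

text \<open>\<open>r m = 4 (m + 1) \<cdot> split_limit m\<close> satisfies \<open>r (m + 1) = r m \<cdot> (2m + 1) / (2m + 2)\<close>,
  and \<open>(2m + 1)(2m + 3) \<le> (2m + 2)\<^sup>2\<close> keeps \<open>r m\<^sup>2 (2m + 1)\<close> below its initial value \<open>1\<close>.\<close>

lemma split_limit_bound: "(4 * (m + 1) * split_limit m) ^ 2 * (2 * m + 1) \<le> 1"
proof (induction m)
  case 0
  then show ?case by (simp add: split_limit_def catalan_0)
next
  case (Suc m)
  define r where "r = 4 * (m + 1) * split_limit m"
  define r' where "r' = 4 * (Suc m + 1) * split_limit (Suc m)"
  have rs: "r' * (2 * real m + 2) = r * (2 * real m + 1)"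
    using arg_cong[OF split_limit_Suc[of m], of "\<lambda>x. 4 * (m + 1) * x"]
    unfolding r_def r'_def by (simp add: algebra_simps)
  have "r' ^ 2 * (2 * Suc m + 1) * (2 * real m + 2) ^ 2
      = (r ^ 2 * (2 * m + 1)) * ((2 * real m + 1) * (2 * real m + 3))"
  proof -
    have "r' ^ 2 * (2 * Suc m + 1) * (2 * real m + 2) ^ 2 = (r' * (2 * real m + 2)) ^ 2 * (2 * real m + 3)"
      by (simp add: power_mult_distrib)
    then show ?thesis
      unfolding rs by (simp add: power2_eq_square algebra_simps)
  qed
  also have "\<dots> \<le> 1 * (2 * real m + 2) ^ 2"
    using Suc by (intro mult_mono) (simp_all add: r_def power2_eq_square algebra_simps)
  finally have "r' ^ 2 * (2 * Suc m + 1) \<le> 1"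
    by (simp add: mult_le_cancel_right_pos)
  then show ?case by (simp add: r'_def)
qed
lemma tendsto_sum_split_limit: "(\<lambda>M. \<Sum>i\<le>M. split_limit i) \<longlonglongrightarrow> 1 / 2"
proof -
  define r where "r m = 4 * (m + 1) * split_limit m" for m
  have "(\<lambda>m. r m ^ 2) \<longlonglongrightarrow> 0"
  proof (rule tendsto_sandwich[of "\<lambda>_. 0" _ _ "\<lambda>m. 1 / (2 * real m + 1)"])
    show "\<forall>\<^sub>F m in sequentially. r m ^ 2 \<le> 1 / (2 * real m + 1)"
      using split_limit_bound by (simp add: r_def field_simps)
    show "(\<lambda>m. 1 / (2 * real m + 1)) \<longlonglongrightarrow> 0"
      by real_asymp
  qed simp_all
  then have "(\<lambda>m. sqrt (r m ^ 2)) \<longlonglongrightarrow> sqrt 0"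
    by (rule tendsto_real_sqrt)
  moreover have "r m \<ge> 0" for m
    using split_limit_pos[of m] by (simp add: r_def)
  ultimately have "r \<longlonglongrightarrow> 0"
    by simp
  then have "(\<lambda>M. r (Suc M)) \<longlonglongrightarrow> 0"
    by (rule LIMSEQ_Suc)
  then have "(\<lambda>M. 1 / 2 - r (Suc M) / 2) \<longlonglongrightarrow> 1 / 2 - 0 / 2"
    by (intro tendsto_diff tendsto_divide tendsto_const) simp_all
  moreover have "(\<Sum>i\<le>M. split_limit i) = 1 / 2 - r (Suc M) / 2" for M
    by (simp add: sum_split_limit r_def field_simps)
  ultimately show ?thesis
    by simp
qed

lemma split_prob_approx:
  assumes "0 < \<epsilon>"
  obtains M N where "1 \<le> M" "1 - 2 * (\<Sum>i\<le>M. split_limit i) \<le> \<epsilon>"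
    "\<And>n. N \<le> n \<Longrightarrow> (\<Sum>i\<le>M. \<bar>split_prob n i - split_limit i\<bar>) < \<epsilon>"
proof -
  obtain M0 where M0: "\<And>M. M0 \<le> M \<Longrightarrow> \<bar>(\<Sum>i\<le>M. split_limit i) - 1 / 2\<bar> < \<epsilon> / 2"
    using LIMSEQ_D[OF tendsto_sum_split_limit, of "\<epsilon> / 2"] assms by auto
  define M where "M = max M0 1"
  have "(\<lambda>n. \<Sum>i\<le>M. \<bar>split_prob n i - split_limit i\<bar>) \<longlonglongrightarrow> (\<Sum>i\<le>M. \<bar>split_limit i - split_limit i\<bar>)"
    by (intro tendsto_intros split_prob_tendsto)
  then have "(\<lambda>n. \<Sum>i\<le>M. \<bar>split_prob n i - split_limit i\<bar>) \<longlonglongrightarrow> 0"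
    by simp
  from LIMSEQ_D[OF this assms] obtain N
    where "\<And>n. N \<le> n \<Longrightarrow> (\<Sum>i\<le>M. \<bar>split_prob n i - split_limit i\<bar>) < \<epsilon>"
    by (auto simp: sum_nonneg)
  moreover have "M0 \<le> M"
    by (simp add: M_def)
  from M0[OF this] have "1 - 2 * (\<Sum>i\<le>M. split_limit i) \<le> \<epsilon>"
    by (unfold abs_less_iff) linarith
  ultimately show ?thesis
    using that[of M N] by (simp add: M_def)
qed

lemma sum_abs_split_prob_diff_le:
  "(\<Sum>i\<le>M. \<bar>split_prob n i - split_prob m i\<bar>)
     \<le> (\<Sum>i\<le>M. \<bar>split_prob n i - split_limit i\<bar>) + (\<Sum>i\<le>M. \<bar>split_prob m i - split_limit i\<bar>)"
  unfolding sum.distrib[symmetric] by (intro sum_mono) linarith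

lemma one_minus_sum_split_prob_le:
  "1 - 2 * (\<Sum>i\<le>M. split_prob n i)
     \<le> (1 - 2 * (\<Sum>i\<le>M. split_limit i)) + 2 * (\<Sum>i\<le>M. \<bar>split_prob n i - split_limit i\<bar>)"
proof -
  have "(\<Sum>i\<le>M. split_limit i) - (\<Sum>i\<le>M. split_prob n i) \<le> (\<Sum>i\<le>M. \<bar>split_prob n i - split_limit i\<bar>)"
    unfolding sum_subtractf[symmetric] by (intro sum_mono) linarith
  then show ?thesis by linarith
qed

section \<open>The recursion for the root law\<close>

lemma gw_weight_eq: "gw_weight t = (1 / 2) ^ nodes t"
  by (induction t) (auto simp: xi_def power_add)

lemma T_odd: "T (2 * n + 1) = pmf_of_set (trees n)"
proof -
  have total: "(\<Sum>s\<in>{s. nodes s = 2 * n + 1}. gw_weight s) = real (catalan n) * (1 / 2) ^ (2 * n + 1)"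
    by (simp add: gw_weight_eq catalan_def trees_def)
  have "(\<lambda>t. if nodes t = 2 * n + 1
                then gw_weight t / (\<Sum>s\<in>{s. nodes s = 2 * n + 1}. gw_weight s) else 0)
           = pmf (pmf_of_set (trees n))" (is "?weights = _")
  proof
    fix t show "?weights t = pmf (pmf_of_set (trees n)) t"
      using catalan_pos[of n] trees_nonempty[of n] finite_trees[of n]
      by (simp add: total gw_weight_eq trees_def catalan_def[symmetric] indicator_def)
  qed
  then show ?thesis
    unfolding T_def by (simp add: type_definition.Rep_inverse[OF td_pmf_embed_pmf])
qed

lemma pmf_bind_finite:
  assumes "finite A" "set_pmf M \<subseteq> A"
  shows "pmf (bind_pmf M F) x = (\<Sum>y\<in>A. pmf M y * pmf (F y) x)"
  unfolding pmf_bind using assms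
  by (subst integral_measure_pmf_real[where A = A]) (auto simp: mult.commute)

lemma finite_boolfuns: "finite (boolfuns k)"
  by (simp add: boolfuns_def)

lemma set_val_pmf: "k \<ge> 1 \<Longrightarrow> set_pmf (val_pmf k p t) \<subseteq> boolfuns k"
proof (induction t)
  case Lf
  then have "{..<k} \<times> (UNIV :: bool set) \<noteq> {}"
    by (simp add: lessThan_empty_iff)
  then show ?case
    by (auto simp: lit_def boolfuns_def)
next
  case (Nd l r)
  then show ?case
    by (auto simp: set_bind_pmf boolfuns_def split: if_split_asm; blast)
qed

definition gate_prob :: "real \<Rightarrow> nat set set \<Rightarrow> nat set set \<Rightarrow> nat set set \<Rightarrow> real" where
  "gate_prob p g h f = p * (if g \<inter> h = f then 1 else 0) + (1 - p) * (if g \<union> h = f then 1 else 0)"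

definition node_law ::
    "nat \<Rightarrow> real \<Rightarrow> (nat set set \<Rightarrow> real) \<Rightarrow> (nat set set \<Rightarrow> real) \<Rightarrow> nat set set \<Rightarrow> real" where
  "node_law k p u v f = (\<Sum>g\<in>boolfuns k. \<Sum>h\<in>boolfuns k. u g * v h * gate_prob p g h f)"

lemma pmf_val_pmf_Nd:
  assumes "k \<ge> 1" "0 \<le> p" "p \<le> 1"
  shows "pmf (val_pmf k p (Nd l r)) f = node_law k p (pmf (val_pmf k p l)) (pmf (val_pmf k p r)) f"
proof -
  let ?B = "boolfuns k"
  define X where "X b = pmf (bind_pmf (val_pmf k p l) (\<lambda>g. bind_pmf (val_pmf k p r) (\<lambda>h.
     return_pmf (if b then g \<inter> h else g \<union> h)))) f" for b
  have X: "X b = (\<Sum>g\<in>?B. pmf (val_pmf k p l) g * (\<Sum>h\<in>?B. pmf (val_pmf k p r) h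
                     * (if (if b then g \<inter> h else g \<union> h) = f then 1 else 0)))" for b
    unfolding X_def
    by (subst pmf_bind_finite[OF finite_boolfuns set_val_pmf[OF assms(1)]],
        intro sum.cong refl, subst pmf_bind_finite[OF finite_boolfuns set_val_pmf[OF assms(1)]])
       (simp add: indicator_def of_bool_def)
  have "pmf (val_pmf k p (Nd l r)) f = (\<Sum>b\<in>UNIV. pmf (bernoulli_pmf p) b * X b)"
    unfolding X_def by (simp only: val_pmf.simps, subst pmf_bind_finite[where A = UNIV]) auto
  also have "\<dots> = p * X True + (1 - p) * X False"
    using assms by (simp add: UNIV_bool)
  also have "\<dots> = node_law k p (pmf (val_pmf k p l)) (pmf (val_pmf k p r)) f"
    unfolding X node_law_def gate_prob_def
    by (simp add: sum_distrib_left sum.distrib[symmetric] algebra_simps)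
  finally show ?thesis .
qed

lemma node_law_sum_sum:
  assumes "finite I" "finite J"
  shows "node_law k p (\<lambda>g. \<Sum>i\<in>I. u i g) (\<lambda>h. \<Sum>j\<in>J. v j h) f
       = (\<Sum>i\<in>I. \<Sum>j\<in>J. node_law k p (u i) (v j) f)"
proof -
  have "(\<Sum>i\<in>I. u i g) * (\<Sum>j\<in>J. v j h) * x = (\<Sum>i\<in>I. \<Sum>j\<in>J. u i g * v j h * x)" for g h x
    unfolding sum_product by (simp add: sum_distrib_right)
  then show ?thesis
    unfolding node_law_def using assms
    by (simp add: sum.swap[of _ "boolfuns k" I] sum.swap[of _ "boolfuns k" J])
qed

lemma node_law_scale: "node_law k p (\<lambda>g. x * u g) (\<lambda>h. y * v h) f = x * y * node_law k p u v f"
  unfolding node_law_def by (simp add: sum_distrib_left algebra_simps)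

definition root_law :: "nat \<Rightarrow> real \<Rightarrow> nat \<Rightarrow> nat set set \<Rightarrow> real" where
  "root_law k p n = pmf (F_law k p (2 * n + 1))"

lemma root_law_eq: "root_law k p n f = (\<Sum>t\<in>trees n. pmf (val_pmf k p t) f) / catalan n"
  unfolding root_law_def F_law_def T_odd catalan_def
  by (rule pmf_bind_pmf_of_set[OF trees_nonempty finite_trees])

lemma root_law_Suc:
  assumes "k \<ge> 1" "0 \<le> p" "p \<le> 1"
  shows "root_law k p (Suc n) f
       = (\<Sum>i\<le>n. split_prob n i * node_law k p (root_law k p i) (root_law k p (n - i)) f)"
proof -
  define U where "U j g = (\<Sum>t\<in>trees j. pmf (val_pmf k p t) g)" for j g
  have U: "U j = (\<lambda>g. real (catalan j) * root_law k p j g)" for j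
    using catalan_pos[of j] by (auto simp: U_def root_law_eq)
  have "U (Suc n) f = (\<Sum>i\<le>n. \<Sum>l\<in>trees i. \<Sum>r\<in>trees (n - i). pmf (val_pmf k p (Nd l r)) f)"
    unfolding U_def by (rule sum_trees_Suc)
  also have "\<dots> = (\<Sum>i\<le>n. node_law k p (U i) (U (n - i)) f)"
    unfolding pmf_val_pmf_Nd[OF assms] U_def[abs_def]
    by (simp add: node_law_sum_sum finite_trees)
  also have "\<dots> = (\<Sum>i\<le>n. real (catalan i) * real (catalan (n - i))
                     * node_law k p (root_law k p i) (root_law k p (n - i)) f)"
    unfolding U node_law_scale ..
  finally show ?thesis
    using catalan_pos[of "Suc n"]
    by (simp add: root_law_eq[of _ _ "Suc n"] U_def[symmetric] split_prob_def sum_divide_distrib)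
qed

section \<open>Contraction and convergence\<close>

text \<open>Doeblin's argument: a stochastic matrix all of whose rows give mass at least \<open>\<beta>\<close> to a
  common state \<open>a\<close> contracts the \<open>\<ell>\<^sub>1\<close> norm of mass-zero vectors by \<open>1 - \<beta>\<close>, because
  subtracting \<open>\<beta>\<close> from column \<open>a\<close> leaves a nonnegative matrix and does not change the product.\<close>

lemma doeblin_contraction:
  fixes K :: "'a \<Rightarrow> 'a \<Rightarrow> real"
  assumes A: "finite A" "a \<in> A"
    and K_nonneg: "\<And>x y. x \<in> A \<Longrightarrow> 0 \<le> K x y"
    and K_sum: "\<And>x. x \<in> A \<Longrightarrow> (\<Sum>y\<in>A. K x y) = 1"
    and K_a: "\<And>x. x \<in> A \<Longrightarrow> \<beta> \<le> K x a"
    and d: "(\<Sum>x\<in>A. d x) = 0"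
  shows "(\<Sum>y\<in>A. \<bar>\<Sum>x\<in>A. d x * K x y\<bar>) \<le> (1 - \<beta>) * (\<Sum>x\<in>A. \<bar>d x\<bar>)"
proof -
  define K' where "K' x y = K x y - (if y = a then \<beta> else 0)" for x y
  have K'_nonneg: "0 \<le> K' x y" if "x \<in> A" for x y
    using K_nonneg[OF that] K_a[OF that] by (simp add: K'_def)
  have K'_sum: "(\<Sum>y\<in>A. K' x y) = 1 - \<beta>" if "x \<in> A" for x
    using K_sum[OF that] A by (simp add: K'_def sum_subtractf)
  have same: "(\<Sum>x\<in>A. d x * K x y) = (\<Sum>x\<in>A. d x * K' x y)" for y
  proof -
    have "d x * K x y = d x * K' x y + (if y = a then \<beta> else 0) * d x" for x
      by (simp add: K'_def algebra_simps)
    then have "(\<Sum>x\<in>A. d x * K x y) = (\<Sum>x\<in>A. d x * K' x y) + (if y = a then \<beta> else 0) * (\<Sum>x\<in>A. d x)"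
      by (simp only: sum.distrib sum_distrib_left)
    then show ?thesis using d by simp
  qed
  have "(\<Sum>y\<in>A. \<bar>\<Sum>x\<in>A. d x * K x y\<bar>) \<le> (\<Sum>y\<in>A. \<Sum>x\<in>A. \<bar>d x\<bar> * K' x y)"
    unfolding same
    by (intro sum_mono order.trans[OF sum_abs]) (simp add: abs_mult K'_nonneg)
  also have "\<dots> = (\<Sum>x\<in>A. \<bar>d x\<bar> * (1 - \<beta>))"
    by (subst sum.swap) (simp add: sum_distrib_left[symmetric] K'_sum)
  finally show ?thesis
    by (simp add: sum_distrib_left mult.commute)
qed

lemma abs_mult_diff_le:
  fixes a b x y :: real
  assumes "0 \<le> x" "0 \<le> b"
  shows "\<bar>a * x - b * y\<bar> \<le> \<bar>a - b\<bar> * x + b * \<bar>x - y\<bar>"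
proof -
  have "a * x - b * y = (a - b) * x + b * (x - y)"
    by (simp add: algebra_simps)
  then show ?thesis
    using abs_triangle_ineq[of "(a - b) * x" "b * (x - y)"] assms by (simp add: abs_mult)
qed

lemma decseq_tendsto_0_by_contraction:
  fixes D :: "nat \<Rightarrow> real" and c C :: real
  assumes D: "decseq D" "\<And>N. 0 \<le> D N" and c: "0 < c"
    and step: "\<And>\<epsilon>. 0 < \<epsilon> \<Longrightarrow> \<exists>M. \<forall>\<^sub>F N in sequentially. D (Suc N) \<le> C * \<epsilon> + (1 - c + C * \<epsilon>) * D (N - M)"
  shows "D \<longlonglongrightarrow> 0"
proof -
  obtain L where L: "D \<longlonglongrightarrow> L"
    using decseq_convergent[OF D(1), of 0] D(2) by (metis le_less)
  have L_nonneg: "0 \<le> L"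
    by (rule LIMSEQ_le_const[OF L]) (use D(2) in auto)
  have bound: "c * L \<le> C * (1 + L) * \<epsilon>" if \<epsilon>: "0 < \<epsilon>" for \<epsilon>
  proof -
    obtain M where "\<forall>\<^sub>F N in sequentially. D (Suc N) \<le> C * \<epsilon> + (1 - c + C * \<epsilon>) * D (N - M)"
      using step[OF \<epsilon>] by blast
    moreover have "(\<lambda>N. D (Suc N)) \<longlonglongrightarrow> L" "(\<lambda>N. C * \<epsilon> + (1 - c + C * \<epsilon>) * D (N - M)) \<longlonglongrightarrow> C * \<epsilon> + (1 - c + C * \<epsilon>) * L"
      using L by (auto intro!: tendsto_intros LIMSEQ_shift_back simp: LIMSEQ_Suc)
    ultimately have "L \<le> C * \<epsilon> + (1 - c + C * \<epsilon>) * L"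
      by (auto intro: tendsto_le[OF sequentially_bot])
    then show ?thesis by (simp add: algebra_simps)
  qed
  have "(\<lambda>j. C * (1 + L) * inverse (real (Suc j))) \<longlonglongrightarrow> C * (1 + L) * 0"
    by (intro tendsto_mult tendsto_const LIMSEQ_inverse_real_of_nat)
  then have "(\<lambda>j. C * (1 + L) * inverse (real (Suc j))) \<longlonglongrightarrow> 0"
    by simp
  then have "c * L \<le> 0"
    by (rule LIMSEQ_le_const) (use bound in simp)
  then have "L = 0"
    using c L_nonneg by (simp add: mult_le_0_iff)
  then show ?thesis using L by simp
qed

locale boolean_gw =
  fixes k :: nat and p :: real
  assumes k_pos: "k \<ge> 1" and p_pos: "0 < p" and p_less_1: "p < 1"
begin

abbreviation BF :: "nat set set set" where
  "BF \<equiv> boolfuns k"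

abbreviation true_fun :: "nat set set" where
  "true_fun \<equiv> Pow {..<k}"

abbreviation \<mu> :: "nat \<Rightarrow> nat set set \<Rightarrow> real" where
  "\<mu> \<equiv> root_law k p"

definition is_law :: "(nat set set \<Rightarrow> real) \<Rightarrow> bool" where
  "is_law u \<longleftrightarrow> (\<forall>f. 0 \<le> u f) \<and> (\<forall>f. f \<notin> BF \<longrightarrow> u f = 0) \<and> (\<Sum>f\<in>BF. u f) = 1"

definition l1_dist :: "(nat set set \<Rightarrow> real) \<Rightarrow> (nat set set \<Rightarrow> real) \<Rightarrow> real" where
  "l1_dist u v = (\<Sum>f\<in>BF. \<bar>u f - v f\<bar>)"

lemma true_fun_in: "true_fun \<in> BF"
  by (simp add: boolfuns_def)

lemma subset_true_fun: "g \<in> BF \<Longrightarrow> g \<subseteq> true_fun"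
  by (simp add: boolfuns_def)

lemma is_law_nonneg: "is_law u \<Longrightarrow> 0 \<le> u f"
  by (simp add: is_law_def)

lemma is_law_outside: "is_law u \<Longrightarrow> f \<notin> BF \<Longrightarrow> u f = 0"
  by (simp add: is_law_def)

lemma is_law_sum: "is_law u \<Longrightarrow> (\<Sum>f\<in>BF. u f) = 1"
  by (simp add: is_law_def)

lemma is_law_le_1: "is_law u \<Longrightarrow> u f \<le> 1"
  by (cases "f \<in> BF")
     (auto simp: is_law_def finite_boolfuns intro!: member_le_sum[where f = u, THEN order.trans])

lemma is_law_root_law: "is_law (\<mu> n)"
proof -
  have "set_pmf (F_law k p (2 * n + 1)) \<subseteq> BF"
    using set_val_pmf[OF k_pos] by (auto simp: F_law_def set_bind_pmf)
  then show ?thesis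
    unfolding is_law_def root_law_def
    using sum_pmf_eq_1[OF finite_boolfuns] by (auto simp: set_pmf_iff)
qed

lemma gate_prob_nonneg: "0 \<le> gate_prob p g h f"
  using p_pos p_less_1 by (simp add: gate_prob_def)

lemma sum_gate_prob:
  assumes "g \<in> BF" "h \<in> BF"
  shows "(\<Sum>f\<in>BF. gate_prob p g h f) = 1"
proof -
  have "g \<inter> h \<in> BF" "g \<union> h \<in> BF"
    using assms by (auto simp: boolfuns_def)
  then show ?thesis
    unfolding gate_prob_def sum.distrib sum_distrib_left[symmetric]
    by (simp add: finite_boolfuns)
qed

lemma gate_prob_outside: "g \<in> BF \<Longrightarrow> h \<in> BF \<Longrightarrow> f \<notin> BF \<Longrightarrow> gate_prob p g h f = 0"
  by (auto simp: gate_prob_def boolfuns_def)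

lemma node_law_nonneg: "(\<And>g. 0 \<le> u g) \<Longrightarrow> (\<And>h. 0 \<le> v h) \<Longrightarrow> 0 \<le> node_law k p u v f"
  unfolding node_law_def by (intro sum_nonneg mult_nonneg_nonneg gate_prob_nonneg)

lemma sum_node_law: "(\<Sum>f\<in>BF. node_law k p u v f) = (\<Sum>g\<in>BF. u g) * (\<Sum>h\<in>BF. v h)"
proof -
  have "(\<Sum>f\<in>BF. node_law k p u v f) = (\<Sum>g\<in>BF. \<Sum>h\<in>BF. u g * v h * (\<Sum>f\<in>BF. gate_prob p g h f))"
    unfolding node_law_def sum_distrib_left
    by (subst sum.swap, rule sum.cong[OF refl], subst sum.swap) simp
  also have "\<dots> = (\<Sum>g\<in>BF. u g) * (\<Sum>h\<in>BF. v h)"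
    by (simp add: sum_gate_prob sum_product)
  finally show ?thesis .
qed

lemma is_law_node_law: "is_law u \<Longrightarrow> is_law v \<Longrightarrow> is_law (node_law k p u v)"
  unfolding is_law_def
  by (auto simp: sum_node_law intro!: node_law_nonneg) (simp add: node_law_def gate_prob_outside)

lemma node_law_commute: "node_law k p u v f = node_law k p v u f"
  unfolding node_law_def
  by (subst sum.swap) (simp add: gate_prob_def Int_commute Un_commute mult_ac)

lemma node_law_ge_term:
  assumes "\<And>g. 0 \<le> u g" "\<And>h. 0 \<le> v h" "g \<in> BF" "h \<in> BF"
  shows "u g * v h * gate_prob p g h f \<le> node_law k p u v f"
proof -
  have "u g * v h * gate_prob p g h f \<le> (\<Sum>h\<in>BF. u g * v h * gate_prob p g h f)"
    using assms by (intro member_le_sum) (auto intro!: mult_nonneg_nonneg gate_prob_nonneg simp: finite_boolfuns)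
  also have "\<dots> \<le> node_law k p u v f"
    unfolding node_law_def using assms
    by (intro member_le_sum[where f = "\<lambda>g. \<Sum>h\<in>BF. u g * v h * gate_prob p g h f"])
       (auto intro!: sum_nonneg mult_nonneg_nonneg gate_prob_nonneg simp: finite_boolfuns)
  finally show ?thesis .
qed

lemma l1_dist_node_law_le:
  assumes u: "is_law u" and u': "is_law u'" and v: "is_law v"
  shows "l1_dist (node_law k p u v) (node_law k p u' v) \<le> (1 - (1 - p) * v true_fun) * l1_dist u u'"
proof -
  define K where "K g f = (\<Sum>h\<in>BF. v h * gate_prob p g h f)" for g f
  have node: "node_law k p w v f = (\<Sum>g\<in>BF. w g * K g f)" for w f
    by (simp add: node_law_def K_def sum_distrib_left mult_ac)
  have "(\<Sum>f\<in>BF. \<bar>\<Sum>g\<in>BF. (u g - u' g) * K g f\<bar>) \<le> (1 - (1 - p) * v true_fun) * l1_dist u u'"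
    unfolding l1_dist_def
  proof (rule doeblin_contraction[OF finite_boolfuns true_fun_in])
    fix g assume g: "g \<in> BF"
    show "0 \<le> K g f" for f
      unfolding K_def by (intro sum_nonneg mult_nonneg_nonneg is_law_nonneg[OF v] gate_prob_nonneg)
    show "(\<Sum>f\<in>BF. K g f) = 1"
      unfolding K_def using g
      by (subst sum.swap) (simp add: sum_distrib_left[symmetric] sum_gate_prob is_law_sum[OF v])
    have "1 - p \<le> gate_prob p g true_fun true_fun"
      using subset_true_fun[OF g] p_pos by (auto simp: gate_prob_def Un_absorb1)
    then have "(1 - p) * v true_fun \<le> v true_fun * gate_prob p g true_fun true_fun"
      by (metis mult.commute mult_right_mono is_law_nonneg[OF v])
    also have "\<dots> \<le> K g true_fun"
      unfolding K_def
      by (rule member_le_sum[OF true_fun_in _ finite_boolfuns])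
         (simp add: mult_nonneg_nonneg is_law_nonneg[OF v] gate_prob_nonneg)
    finally show "(1 - p) * v true_fun \<le> K g true_fun" .
  next
    show "(\<Sum>g\<in>BF. u g - u' g) = 0"
      by (simp add: sum_subtractf is_law_sum[OF u] is_law_sum[OF u'])
  qed
  then show ?thesis
    unfolding l1_dist_def node by (simp add: sum_subtractf[symmetric] left_diff_distrib)
qed

lemma root_law_rec: "\<mu> (Suc n) f = (\<Sum>i\<le>n. split_prob n i * node_law k p (\<mu> i) (\<mu> (n - i)) f)"
  using root_law_Suc k_pos p_pos p_less_1 by simp

lemma root_law_ge_term:
  "i \<le> n \<Longrightarrow> split_prob n i * node_law k p (\<mu> i) (\<mu> (n - i)) f \<le> \<mu> (Suc n) f"
  unfolding root_law_rec[of n f]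
  by (rule member_le_sum[where f = "\<lambda>i. split_prob n i * node_law k p (\<mu> i) (\<mu> (n - i)) f"])
     (auto intro!: mult_nonneg_nonneg split_prob_nonneg node_law_nonneg is_law_nonneg[OF is_law_root_law])

text \<open>By the symmetry \<open>i \<mapsto> n - i\<close> of the recursion, the \<open>M + 1\<close> smallest and the \<open>M + 1\<close> largest
  sizes of the left subtree contribute equally; \<open>tail_mass\<close> collects the sizes in between.\<close>

definition tail_mass :: "nat \<Rightarrow> nat \<Rightarrow> nat set set \<Rightarrow> real" where
  "tail_mass n M f = (\<Sum>i\<in>{M<..<n - M}. split_prob n i * node_law k p (\<mu> i) (\<mu> (n - i)) f)"

lemma tail_mass_nonneg: "0 \<le> tail_mass n M f"
  unfolding tail_mass_def
  by (intro sum_nonneg mult_nonneg_nonneg split_prob_nonneg node_law_nonneg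
      is_law_nonneg[OF is_law_root_law])

lemma root_law_Suc_split:
  assumes "2 * M + 1 \<le> n"
  shows "\<mu> (Suc n) f = 2 * (\<Sum>i\<le>M. split_prob n i * node_law k p (\<mu> (n - i)) (\<mu> i) f) + tail_mass n M f"
proof -
  define t where "t i = split_prob n i * node_law k p (\<mu> i) (\<mu> (n - i)) f" for i
  have t_sym: "t (n - i) = t i" if "i \<le> n" for i
    unfolding t_def split_prob_sym[OF that] by (subst node_law_commute) (simp add: that)
  have t_swap: "t i = split_prob n i * node_law k p (\<mu> (n - i)) (\<mu> i) f" for i
    unfolding t_def by (subst node_law_commute) (rule refl)
  have parts: "{..n} = {..M} \<union> ({M<..<n - M} \<union> {n - M..n})"
    using assms by auto
  have "(\<Sum>i\<le>n. t i) = (\<Sum>i\<le>M. t i) + ((\<Sum>i\<in>{M<..<n - M}. t i) + (\<Sum>i\<in>{n - M..n}. t i))"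
    unfolding parts using assms by (subst sum.union_disjoint, simp, simp, fastforce)+ simp
  moreover have "(\<Sum>i\<in>{n - M..n}. t i) = (\<Sum>i\<le>M. t (n - i))"
    by (rule sum.reindex_bij_witness[where i = "\<lambda>i. n - i" and j = "\<lambda>i. n - i"]) (use assms in auto)
  moreover have "(\<Sum>i\<le>M. t (n - i)) = (\<Sum>i\<le>M. t i)"
    using assms by (intro sum.cong refl t_sym) auto
  ultimately have "(\<Sum>i\<le>n. t i) = 2 * (\<Sum>i\<le>M. t i) + tail_mass n M f"
    by (simp add: tail_mass_def t_def)
  then show ?thesis
    unfolding root_law_rec t_def[symmetric] by (simp only: t_swap)
qed

lemma sum_tail_mass:
  assumes "2 * M + 1 \<le> n"
  shows "(\<Sum>f\<in>BF. tail_mass n M f) = 1 - 2 * (\<Sum>i\<le>M. split_prob n i)"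
proof -
  have node_sum: "(\<Sum>f\<in>BF. node_law k p (\<mu> (n - i)) (\<mu> i) f) = 1" for i
    using is_law_sum[OF is_law_node_law[OF is_law_root_law is_law_root_law]] .
  have "1 = (\<Sum>f\<in>BF. \<mu> (Suc n) f)"
    using is_law_sum[OF is_law_root_law] by simp
  also have "\<dots> = 2 * (\<Sum>i\<le>M. split_prob n i * (\<Sum>f\<in>BF. node_law k p (\<mu> (n - i)) (\<mu> i) f))
                  + (\<Sum>f\<in>BF. tail_mass n M f)"
    unfolding root_law_Suc_split[OF assms] sum.distrib sum_distrib_left[symmetric]
    by (subst sum.swap) (simp add: sum_distrib_left)
  finally show ?thesis
    by (simp add: node_sum)
qed

lemma sum_split_prob_le_half: "2 * M + 1 \<le> n \<Longrightarrow> 2 * (\<Sum>i\<le>M. split_prob n i) \<le> 1"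
  using sum_tail_mass[of M n] sum_nonneg[of BF "tail_mass n M", OF tail_mass_nonneg] by simp

lemma l1_dist_nonneg: "0 \<le> l1_dist u v"
  by (simp add: l1_dist_def sum_nonneg)

lemma l1_dist_le_2: "is_law u \<Longrightarrow> is_law v \<Longrightarrow> l1_dist u v \<le> 2"
  unfolding l1_dist_def
  by (rule order.trans[OF sum_mono[where g = "\<lambda>f. u f + v f"]])
     (auto simp: is_law_def sum.distrib abs_le_iff)

lemma abs_le_l1_dist:
  assumes "is_law u" "is_law v"
  shows "\<bar>u f - v f\<bar> \<le> l1_dist u v"
proof (cases "f \<in> BF")
  case True
  then show ?thesis
    unfolding l1_dist_def by (rule member_le_sum) (auto simp: finite_boolfuns)
qed (use assms in \<open>simp add: is_law_outside l1_dist_nonneg\<close>)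

lemma l1_dist_root_law_Suc_le:
  assumes n: "2 * M + 1 \<le> n" and m: "2 * M + 1 \<le> m"
  shows "l1_dist (\<mu> (Suc n)) (\<mu> (Suc m))
       \<le> (\<Sum>i\<le>M. 2 * (\<bar>split_prob n i - split_prob m i\<bar> + split_prob m i
              * l1_dist (node_law k p (\<mu> (n - i)) (\<mu> i)) (node_law k p (\<mu> (m - i)) (\<mu> i))))
         + (1 - 2 * (\<Sum>i\<le>M. split_prob n i)) + (1 - 2 * (\<Sum>i\<le>M. split_prob m i))"
proof -
  define A where "A i = node_law k p (\<mu> (n - i)) (\<mu> i)" for i
  define B where "B i = node_law k p (\<mu> (m - i)) (\<mu> i)" for i
  define c where "c i f = 2 * (\<bar>split_prob n i - split_prob m i\<bar> * A i f + split_prob m i * \<bar>A i f - B i f\<bar>)" for i f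
  have A_law: "is_law (A i)" for i
    unfolding A_def by (intro is_law_node_law is_law_root_law)
  have pointwise: "\<bar>\<mu> (Suc n) f - \<mu> (Suc m) f\<bar> \<le> (\<Sum>i\<le>M. c i f) + tail_mass n M f + tail_mass m M f" for f
  proof -
    have "\<mu> (Suc n) f - \<mu> (Suc m) f = (\<Sum>i\<le>M. 2 * (split_prob n i * A i f - split_prob m i * B i f))
                                        + (tail_mass n M f - tail_mass m M f)"
      unfolding root_law_Suc_split[OF n] root_law_Suc_split[OF m] A_def B_def
      by (simp add: sum_subtractf sum_distrib_left algebra_simps)
    moreover have "\<bar>2 * (split_prob n i * A i f - split_prob m i * B i f)\<bar> \<le> c i f" for i
    proof -
      have "\<bar>split_prob n i * A i f - split_prob m i * B i f\<bar>
          \<le> \<bar>split_prob n i - split_prob m i\<bar> * A i f + split_prob m i * \<bar>A i f - B i f\<bar>"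
        by (rule abs_mult_diff_le) (simp_all add: is_law_nonneg[OF A_law] split_prob_nonneg)
      then show ?thesis
        unfolding c_def abs_mult by simp
    qed
    then have "\<bar>\<Sum>i\<le>M. 2 * (split_prob n i * A i f - split_prob m i * B i f)\<bar> \<le> (\<Sum>i\<le>M. c i f)"
      by (intro order.trans[OF sum_abs] sum_mono)
    ultimately show ?thesis
      using tail_mass_nonneg[of n M f] tail_mass_nonneg[of m M f] by linarith
  qed
  have "(\<Sum>f\<in>BF. \<Sum>i\<le>M. c i f)
      = (\<Sum>i\<le>M. 2 * (\<bar>split_prob n i - split_prob m i\<bar> + split_prob m i * l1_dist (A i) (B i)))"
    unfolding c_def l1_dist_def
    by (subst sum.swap) (simp add: sum.distrib sum_distrib_left[symmetric] is_law_sum[OF A_law])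
  moreover have "l1_dist (\<mu> (Suc n)) (\<mu> (Suc m))
      \<le> (\<Sum>f\<in>BF. \<Sum>i\<le>M. c i f) + (\<Sum>f\<in>BF. tail_mass n M f) + (\<Sum>f\<in>BF. tail_mass m M f)"
    unfolding l1_dist_def sum.distrib[symmetric] by (intro sum_mono pointwise)
  ultimately show ?thesis
    unfolding sum_tail_mass[OF n] sum_tail_mass[OF m] A_def B_def by simp
qed

definition \<beta> :: real where
  "\<beta> = (1 - p) * \<mu> 1 true_fun"

lemma \<beta>_nonneg: "0 \<le> \<beta>"
  unfolding \<beta>_def using p_less_1 is_law_nonneg[OF is_law_root_law] by simp

lemma l1_dist_root_law_Suc_contract:
  assumes n: "2 * M + 1 \<le> n" and m: "2 * M + 1 \<le> m" and M: "1 \<le> M"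
    and X: "\<And>i. i \<le> M \<Longrightarrow> l1_dist (\<mu> (n - i)) (\<mu> (m - i)) \<le> X"
  shows "l1_dist (\<mu> (Suc n)) (\<mu> (Suc m))
       \<le> (\<Sum>i\<le>M. 2 * \<bar>split_prob n i - split_prob m i\<bar>) + (1 - 2 * (\<Sum>i\<le>M. split_prob n i))
         + (1 - 2 * (\<Sum>i\<le>M. split_prob m i)) + (1 - 2 * split_prob m 1 * \<beta>) * X"
proof -
  define g where "g i = 2 * split_prob m i * ((1 - p) * \<mu> i true_fun) * X" for i
  have X_nonneg: "0 \<le> X"
    using X[of 0] l1_dist_nonneg[of "\<mu> n" "\<mu> m"] by simp
  have g_nonneg: "0 \<le> g i" for i
    unfolding g_def using p_less_1 X_nonneg
    by (intro mult_nonneg_nonneg split_prob_nonneg is_law_nonneg[OF is_law_root_law]) auto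
  have contract: "l1_dist (node_law k p (\<mu> (n - i)) (\<mu> i)) (node_law k p (\<mu> (m - i)) (\<mu> i))
      \<le> (1 - (1 - p) * \<mu> i true_fun) * X" if "i \<le> M" for i
  proof (rule order.trans[OF l1_dist_node_law_le mult_left_mono])
    show "0 \<le> 1 - (1 - p) * \<mu> i true_fun"
      using p_pos p_less_1 is_law_le_1[OF is_law_root_law, of i true_fun]
        is_law_nonneg[OF is_law_root_law, of i true_fun]
      by (simp add: mult_le_one)
  qed (use X that is_law_root_law in auto)
  have "(\<Sum>i\<le>M. 2 * (\<bar>split_prob n i - split_prob m i\<bar> + split_prob m i
              * l1_dist (node_law k p (\<mu> (n - i)) (\<mu> i)) (node_law k p (\<mu> (m - i)) (\<mu> i))))
      \<le> (\<Sum>i\<le>M. 2 * \<bar>split_prob n i - split_prob m i\<bar> + 2 * split_prob m i * X - g i)"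
  proof (rule sum_mono)
    fix i assume "i \<in> {..M}"
    then have "split_prob m i * l1_dist (node_law k p (\<mu> (n - i)) (\<mu> i)) (node_law k p (\<mu> (m - i)) (\<mu> i))
        \<le> split_prob m i * ((1 - (1 - p) * \<mu> i true_fun) * X)"
      by (intro mult_left_mono contract split_prob_nonneg) simp
    then show "2 * (\<bar>split_prob n i - split_prob m i\<bar> + split_prob m i
              * l1_dist (node_law k p (\<mu> (n - i)) (\<mu> i)) (node_law k p (\<mu> (m - i)) (\<mu> i)))
        \<le> 2 * \<bar>split_prob n i - split_prob m i\<bar> + 2 * split_prob m i * X - g i"
      by (simp add: g_def algebra_simps)
  qed
  also have "\<dots> = (\<Sum>i\<le>M. 2 * \<bar>split_prob n i - split_prob m i\<bar>)
                  + 2 * (\<Sum>i\<le>M. split_prob m i) * X - (\<Sum>i\<le>M. g i)"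
    by (simp add: sum.distrib sum_subtractf sum_distrib_left sum_distrib_right)
  also have "\<dots> \<le> (\<Sum>i\<le>M. 2 * \<bar>split_prob n i - split_prob m i\<bar>) + X - g 1"
    using mult_right_mono[OF sum_split_prob_le_half[OF m] X_nonneg]
      member_le_sum[of 1 "{..M}" g] M g_nonneg by simp
  finally show ?thesis
    using l1_dist_root_law_Suc_le[OF n m] by (simp add: g_def \<beta>_def algebra_simps)
qed

definition tail_diam :: "nat \<Rightarrow> real" where
  "tail_diam N = Sup ((\<lambda>(n, m). l1_dist (\<mu> n) (\<mu> m)) ` ({N..} \<times> {N..}))"

lemma l1_dist_le_tail_diam: "N \<le> n \<Longrightarrow> N \<le> m \<Longrightarrow> l1_dist (\<mu> n) (\<mu> m) \<le> tail_diam N"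
  unfolding tail_diam_def
  by (rule cSup_upper) (auto intro!: bdd_aboveI[where M = 2] l1_dist_le_2 is_law_root_law)

lemma tail_diam_le: "(\<And>n m. N \<le> n \<Longrightarrow> N \<le> m \<Longrightarrow> l1_dist (\<mu> n) (\<mu> m) \<le> X) \<Longrightarrow> tail_diam N \<le> X"
  unfolding tail_diam_def by (rule cSup_least) auto

lemma tail_diam_nonneg: "0 \<le> tail_diam N"
  using l1_dist_le_tail_diam[of N N N] l1_dist_nonneg[of "\<mu> N" "\<mu> N"] by simp

lemma decseq_tail_diam: "decseq tail_diam"
  unfolding decseq_def by (auto intro!: tail_diam_le l1_dist_le_tail_diam)

lemma l1_dist_root_law_Suc_approx:
  assumes \<epsilon>: "0 < \<epsilon>" and M: "1 \<le> M" and n: "2 * M + 1 \<le> n" and m: "2 * M + 1 \<le> m"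
    and limit_mass: "1 - 2 * (\<Sum>i\<le>M. split_limit i) \<le> \<epsilon>"
    and close_n: "(\<Sum>i\<le>M. \<bar>split_prob n i - split_limit i\<bar>) < \<epsilon>"
    and close_m: "(\<Sum>i\<le>M. \<bar>split_prob m i - split_limit i\<bar>) < \<epsilon>"
    and X: "\<And>i. i \<le> M \<Longrightarrow> l1_dist (\<mu> (n - i)) (\<mu> (m - i)) \<le> X"
  shows "l1_dist (\<mu> (Suc n)) (\<mu> (Suc m))
       \<le> (10 + 2 * \<beta>) * \<epsilon> + (1 - 2 * split_limit 1 * \<beta> + (10 + 2 * \<beta>) * \<epsilon>) * X"
proof -
  have X_nonneg: "0 \<le> X"
    using X[of 0] l1_dist_nonneg[of "\<mu> n" "\<mu> m"] by simp
  have "\<bar>split_prob m 1 - split_limit 1\<bar> \<le> (\<Sum>i\<le>M. \<bar>split_prob m i - split_limit i\<bar>)"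
    using M by (intro member_le_sum[where f = "\<lambda>i. \<bar>split_prob m i - split_limit i\<bar>"]) auto
  then have "split_limit 1 \<le> \<epsilon> + split_prob m 1"
    using close_m by linarith
  then have "2 * \<beta> * split_limit 1 \<le> 2 * \<beta> * (\<epsilon> + split_prob m 1)"
    using \<beta>_nonneg by (intro mult_left_mono) auto
  then have "(1 - 2 * split_prob m 1 * \<beta>) * X \<le> (1 - 2 * split_limit 1 * \<beta> + 2 * \<beta> * \<epsilon>) * X"
    using X_nonneg by (intro mult_right_mono) (auto simp: algebra_simps)
  moreover have "(1 - 2 * split_limit 1 * \<beta> + (10 + 2 * \<beta>) * \<epsilon>) * X
      = (1 - 2 * split_limit 1 * \<beta> + 2 * \<beta> * \<epsilon>) * X + 10 * \<epsilon> * X"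
    by (simp add: algebra_simps)
  moreover have "0 \<le> 10 * \<epsilon> * X" "0 \<le> 2 * \<beta> * \<epsilon>"
    using \<epsilon> \<beta>_nonneg X_nonneg by simp_all
  moreover have "(10 + 2 * \<beta>) * \<epsilon> = 10 * \<epsilon> + 2 * \<beta> * \<epsilon>"
    by (simp add: algebra_simps)
  moreover have "(\<Sum>i\<le>M. 2 * \<bar>split_prob n i - split_prob m i\<bar>) = 2 * (\<Sum>i\<le>M. \<bar>split_prob n i - split_prob m i\<bar>)"
    by (simp add: sum_distrib_left)
  ultimately show ?thesis
    using l1_dist_root_law_Suc_contract[OF n m M X] sum_abs_split_prob_diff_le[where M = M and n = n and m = m]
      one_minus_sum_split_prob_le[where M = M and n = n] one_minus_sum_split_prob_le[where M = M and n = m]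
      close_n close_m limit_mass
    by linarith
qed

lemma tail_diam_Suc_le:
  assumes "0 < \<epsilon>"
  shows "\<exists>M. \<forall>\<^sub>F N in sequentially. tail_diam (Suc N)
           \<le> (10 + 2 * \<beta>) * \<epsilon> + (1 - 2 * split_limit 1 * \<beta> + (10 + 2 * \<beta>) * \<epsilon>) * tail_diam (N - M)"
proof -
  obtain M N0 where M: "1 \<le> M" and limit_mass: "1 - 2 * (\<Sum>i\<le>M. split_limit i) \<le> \<epsilon>"
    and close: "\<And>n. N0 \<le> n \<Longrightarrow> (\<Sum>i\<le>M. \<bar>split_prob n i - split_limit i\<bar>) < \<epsilon>"
    using split_prob_approx[OF assms] by blast
  have "tail_diam (Suc N)
      \<le> (10 + 2 * \<beta>) * \<epsilon> + (1 - 2 * split_limit 1 * \<beta> + (10 + 2 * \<beta>) * \<epsilon>) * tail_diam (N - M)"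
    if N: "max N0 (2 * M + 1) \<le> N" for N
  proof (rule tail_diam_le)
    fix n' m' assume "Suc N \<le> n'" "Suc N \<le> m'"
    then obtain n m where nm: "n' = Suc n" "m' = Suc m" "N \<le> n" "N \<le> m"
      by (metis Suc_le_D Suc_le_mono)
    show "l1_dist (\<mu> n') (\<mu> m')
        \<le> (10 + 2 * \<beta>) * \<epsilon> + (1 - 2 * split_limit 1 * \<beta> + (10 + 2 * \<beta>) * \<epsilon>) * tail_diam (N - M)"
      unfolding nm(1,2) using N nm(3,4)
      by (intro l1_dist_root_law_Suc_approx[OF assms M _ _ limit_mass close close]
          l1_dist_le_tail_diam) auto
  qed
  then show ?thesis
    unfolding eventually_sequentially by (intro exI[of _ M] exI[of _ "max N0 (2 * M + 1)"]) auto
qed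

section \<open>Positivity of the limit law\<close>

lemma lit_in_set_val_pmf_Lf: "j < k \<Longrightarrow> lit k (j, b) \<in> set_pmf (val_pmf k p Lf)"
  by (auto simp: lessThan_empty_iff)

lemma Int_Un_in_set_val_pmf_Nd:
  assumes "g \<in> set_pmf (val_pmf k p l)" "h \<in> set_pmf (val_pmf k p r)"
  shows "g \<inter> h \<in> set_pmf (val_pmf k p (Nd l r))" "g \<union> h \<in> set_pmf (val_pmf k p (Nd l r))"
proof -
  have "set_pmf (bernoulli_pmf p) = UNIV"
    using p_pos p_less_1 by simp
  then have "(if b then g \<inter> h else g \<union> h) \<in> set_pmf (val_pmf k p (Nd l r))" for b
    using assms by (auto simp: set_bind_pmf)
  from this[of True] this[of False]
  show "g \<inter> h \<in> set_pmf (val_pmf k p (Nd l r))" "g \<union> h \<in> set_pmf (val_pmf k p (Nd l r))"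
    by simp_all
qed

definition realizable :: "nat set set \<Rightarrow> bool" where
  "realizable f \<longleftrightarrow> (\<exists>t. f \<in> set_pmf (val_pmf k p t))"

lemma realizable_lit: "j < k \<Longrightarrow> realizable (lit k (j, b))"
  unfolding realizable_def using lit_in_set_val_pmf_Lf by blast

lemma realizable_Int: "realizable g \<Longrightarrow> realizable h \<Longrightarrow> realizable (g \<inter> h)"
  unfolding realizable_def using Int_Un_in_set_val_pmf_Nd(1) by blast

lemma realizable_Un: "realizable g \<Longrightarrow> realizable h \<Longrightarrow> realizable (g \<union> h)"
  unfolding realizable_def using Int_Un_in_set_val_pmf_Nd(2) by blast

lemma realizable_minterm:
  assumes "A \<subseteq> {..<k}"
  shows "realizable {A}"
proof -
  have "finite J \<Longrightarrow> J \<noteq> {} \<Longrightarrow> J \<subseteq> {..<k} \<Longrightarrow> realizable (\<Inter>j\<in>J. lit k (j, j \<in> A))" for J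
    by (induction J rule: finite_ne_induct) (auto intro: realizable_lit realizable_Int)
  moreover have "{..<k} \<noteq> {}"
    using k_pos by (auto simp: lessThan_empty_iff)
  moreover have "(\<Inter>j\<in>{..<k}. lit k (j, j \<in> A)) = {A}"
  proof (intro equalityI subsetI)
    fix X assume X: "X \<in> (\<Inter>j\<in>{..<k}. lit k (j, j \<in> A))"
    then have "X \<in> lit k (0, 0 \<in> A)"
      using k_pos by simp
    then have "X \<subseteq> {..<k}"
      by (simp add: lit_def)
    with X assms show "X \<in> {A}"
      by (auto simp: lit_def)
  qed (use assms in \<open>auto simp: lit_def\<close>)
  ultimately show ?thesis
    by (metis finite_lessThan order_refl)
qed

lemma realizable_boolfun:
  assumes f: "f \<in> BF"
  shows "realizable f"
proof (cases "f = {}")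
  case True
  have "realizable (lit k (0, True) \<inter> lit k (0, False))"
    using k_pos by (intro realizable_Int realizable_lit) auto
  moreover have "lit k (0, True) \<inter> lit k (0, False) = {}"
    by (auto simp: lit_def)
  ultimately show ?thesis
    using True by simp
next
  case False
  have "finite f" "f \<subseteq> Pow {..<k}"
    using f by (auto simp: boolfuns_def intro: finite_subset)
  from this(1) False this(2) show ?thesis
  proof (induction f rule: finite_ne_induct)
    case (insert A F)
    then show ?case
      using realizable_Un[OF realizable_minterm[of A]] by (metis PowD insert_is_Un insert_subset)
  qed (auto intro: realizable_minterm)
qed

lemma root_law_pos:
  assumes "t \<in> trees n" "f \<in> set_pmf (val_pmf k p t)"
  shows "0 < \<mu> n f"
proof -
  have "pmf (val_pmf k p t) f \<le> (\<Sum>s\<in>trees n. pmf (val_pmf k p s) f)"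
    using assms(1) by (rule member_le_sum) (simp_all add: finite_trees)
  moreover have "0 < pmf (val_pmf k p t) f"
    using assms(2) by (simp add: pmf_positive)
  ultimately show ?thesis
    using catalan_pos[of n] by (simp add: root_law_eq)
qed

lemma root_law_1_true_fun_pos: "0 < \<mu> 1 true_fun"
proof -
  have "lit k (0, True) \<union> lit k (0, False) = true_fun"
    by (auto simp: lit_def)
  moreover have "lit k (0, True) \<union> lit k (0, False) \<in> set_pmf (val_pmf k p (Nd Lf Lf))"
    using k_pos by (intro Int_Un_in_set_val_pmf_Nd(2) lit_in_set_val_pmf_Lf) auto
  ultimately show ?thesis
    by (intro root_law_pos[of "Nd Lf Lf"]) (simp_all add: trees_def)
qed

lemma tail_diam_tendsto_0: "tail_diam \<longlonglongrightarrow> 0"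
proof (rule decseq_tendsto_0_by_contraction[OF decseq_tail_diam tail_diam_nonneg])
  show "0 < 2 * split_limit 1 * \<beta>"
    using split_limit_pos root_law_1_true_fun_pos p_less_1 by (simp add: \<beta>_def)
qed (rule tail_diam_Suc_le)

definition limit_law :: "nat set set \<Rightarrow> real" where
  "limit_law f = lim (\<lambda>n. \<mu> n f)"

lemma root_law_tendsto: "(\<lambda>n. \<mu> n f) \<longlonglongrightarrow> limit_law f"
proof -
  have "Cauchy (\<lambda>n. \<mu> n f)"
  proof (rule metric_CauchyI)
    fix e :: real assume "0 < e"
    from LIMSEQ_D[OF tail_diam_tendsto_0 this] obtain N where N: "tail_diam N < e"
      by (auto simp: tail_diam_nonneg)
    have "dist (\<mu> m f) (\<mu> n f) < e" if "N \<le> m" "N \<le> n" for m n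
      using abs_le_l1_dist[OF is_law_root_law is_law_root_law, of m f n]
        l1_dist_le_tail_diam[OF that] N by (simp add: dist_real_def)
    then show "\<exists>M. \<forall>m\<ge>M. \<forall>n\<ge>M. dist (\<mu> m f) (\<mu> n f) < e"
      by blast
  qed
  then show ?thesis
    unfolding limit_law_def by (simp add: Cauchy_convergent_iff convergent_LIMSEQ_iff)
qed

lemma is_law_limit_law: "is_law limit_law"
  unfolding is_law_def
proof (intro conjI allI impI)
  show "0 \<le> limit_law f" for f
    by (rule LIMSEQ_le_const[OF root_law_tendsto]) (auto intro: is_law_nonneg[OF is_law_root_law])
  show "limit_law f = 0" if "f \<notin> BF" for f
    using root_law_tendsto[of f] by (simp add: is_law_outside[OF is_law_root_law that] LIMSEQ_const_iff)
  have "(\<lambda>n. \<Sum>f\<in>BF. \<mu> n f) \<longlonglongrightarrow> (\<Sum>f\<in>BF. limit_law f)"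
    by (intro tendsto_sum root_law_tendsto)
  then show "(\<Sum>f\<in>BF. limit_law f) = 1"
    by (simp add: is_law_sum[OF is_law_root_law] LIMSEQ_const_iff)
qed

lemma limit_law_ge:
  assumes "\<And>n. i \<le> n \<Longrightarrow> split_prob n i * x n \<le> \<mu> (Suc n) f" and "x \<longlonglongrightarrow> y"
  shows "split_limit i * y \<le> limit_law f"
proof (rule LIMSEQ_le[where X = "\<lambda>n. split_prob n i * x n" and Y = "\<lambda>n. \<mu> (Suc n) f"])
  show "(\<lambda>n. split_prob n i * x n) \<longlonglongrightarrow> split_limit i * y"
    by (intro tendsto_mult split_prob_tendsto assms(2))
  show "(\<lambda>n. \<mu> (Suc n) f) \<longlonglongrightarrow> limit_law f"
    by (rule LIMSEQ_Suc[OF root_law_tendsto])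
qed (use assms(1) in blast)

lemma node_law_true_fun_ge:
  assumes u: "is_law u" and v: "is_law v"
  shows "(1 - p) * u true_fun \<le> node_law k p u v true_fun"
proof -
  have "(\<Sum>h\<in>BF. u true_fun * v h * (1 - p)) \<le> (\<Sum>h\<in>BF. u true_fun * v h * gate_prob p true_fun h true_fun)"
  proof (rule sum_mono)
    fix h assume "h \<in> BF"
    then have "1 - p \<le> gate_prob p true_fun h true_fun"
      using p_pos subset_true_fun by (auto simp: gate_prob_def Un_absorb2)
    then show "u true_fun * v h * (1 - p) \<le> u true_fun * v h * gate_prob p true_fun h true_fun"
      by (intro mult_left_mono mult_nonneg_nonneg is_law_nonneg[OF u] is_law_nonneg[OF v])
  qed
  also have "\<dots> \<le> node_law k p u v true_fun"
    unfolding node_law_def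
    by (rule member_le_sum[OF true_fun_in, where f = "\<lambda>g. \<Sum>h\<in>BF. u g * v h * gate_prob p g h true_fun"])
       (auto intro!: sum_nonneg mult_nonneg_nonneg is_law_nonneg[OF u] is_law_nonneg[OF v]
          gate_prob_nonneg simp: finite_boolfuns)
  finally show ?thesis
    using is_law_sum[OF v] by (simp add: sum_distrib_left[symmetric] sum_distrib_right[symmetric] mult_ac)
qed

lemma limit_law_true_fun_pos: "0 < limit_law true_fun"
proof -
  have "split_limit 1 * ((1 - p) * \<mu> 1 true_fun) \<le> limit_law true_fun"
  proof (rule limit_law_ge)
    fix n :: nat assume "1 \<le> n"
    have "split_prob n 1 * ((1 - p) * \<mu> 1 true_fun) \<le> split_prob n 1 * node_law k p (\<mu> 1) (\<mu> (n - 1)) true_fun"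
      by (intro mult_left_mono split_prob_nonneg node_law_true_fun_ge is_law_root_law)
    also have "\<dots> \<le> \<mu> (Suc n) true_fun"
      by (rule root_law_ge_term) fact
    finally show "split_prob n 1 * ((1 - p) * \<mu> 1 true_fun) \<le> \<mu> (Suc n) true_fun" .
  qed simp
  moreover have "0 < split_limit 1 * ((1 - p) * \<mu> 1 true_fun)"
    using split_limit_pos root_law_1_true_fun_pos p_less_1 by simp
  ultimately show ?thesis by linarith
qed

lemma limit_law_pos:
  assumes f: "f \<in> BF"
  shows "0 < limit_law f"
proof -
  obtain t where t: "f \<in> set_pmf (val_pmf k p t)"
    using realizable_boolfun[OF f] by (auto simp: realizable_def)
  obtain i where "nodes t = 2 * i + 1"
    using nodes_odd[of t] by (metis oddE)
  then have pos: "0 < \<mu> i f"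
    using t by (intro root_law_pos) (simp_all add: trees_def)
  have "split_limit i * (\<mu> i f * limit_law true_fun * p) \<le> limit_law f"
  proof (rule limit_law_ge)
    fix n :: nat assume n: "i \<le> n"
    have "p \<le> gate_prob p f true_fun f"
      using subset_true_fun[OF f] p_less_1 by (auto simp: gate_prob_def Int_absorb2)
    then have "\<mu> i f * \<mu> (n - i) true_fun * p \<le> \<mu> i f * \<mu> (n - i) true_fun * gate_prob p f true_fun f"
      by (intro mult_left_mono mult_nonneg_nonneg is_law_nonneg[OF is_law_root_law])
    also have "\<dots> \<le> node_law k p (\<mu> i) (\<mu> (n - i)) f"
      by (rule node_law_ge_term[OF is_law_nonneg[OF is_law_root_law] is_law_nonneg[OF is_law_root_law] f true_fun_in])
    finally have "split_prob n i * (\<mu> i f * \<mu> (n - i) true_fun * p) \<le> split_prob n i * node_law k p (\<mu> i) (\<mu> (n - i)) f"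
      by (intro mult_left_mono split_prob_nonneg)
    also have "\<dots> \<le> \<mu> (Suc n) f"
      by (rule root_law_ge_term[OF n])
    finally show "split_prob n i * (\<mu> i f * \<mu> (n - i) true_fun * p) \<le> \<mu> (Suc n) f" .
  qed (intro tendsto_intros LIMSEQ_shift_back root_law_tendsto)
  moreover have "0 < split_limit i * (\<mu> i f * limit_law true_fun * p)"
    using split_limit_pos pos limit_law_true_fun_pos p_pos by simp
  ultimately show ?thesis by linarith
qed

end

lemma pmf_embed_pmf_finite_support:
  assumes "finite A" "\<And>x. 0 \<le> f x" "\<And>x. x \<notin> A \<Longrightarrow> f x = 0" "(\<Sum>x\<in>A. f x) = 1"
  shows "pmf (embed_pmf f) = f"
proof -
  have "(\<integral>\<^sup>+x. ennreal (f x) \<partial>count_space UNIV) = (\<Sum>x\<in>A. ennreal (f x))"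
    using assms by (intro nn_integral_count_space') auto
  also have "\<dots> = 1"
    using assms by (simp add: sum_ennreal)
  finally show ?thesis
    using pmf_embed_pmf[of f] assms(2) by auto
qed

theorem mainTheorem7:
  fixes k :: nat and p :: real
  assumes "k \<ge> 1" and "0 < p" and "p < 1"
  shows "\<exists>Finf :: nat set set pmf.
           set_pmf Finf \<subseteq> boolfuns k \<and>
           (\<forall>f. (\<lambda>m. pmf (F_law k p (2 * m + 1)) f) \<longlonglongrightarrow> pmf Finf f) \<and>
           (\<forall>f \<in> boolfuns k. pmf Finf f > 0)"
proof -
  interpret boolean_gw k p
    using assms by unfold_locales
  have pmf_limit: "pmf (embed_pmf limit_law) = limit_law"
    using is_law_limit_law
    by (intro pmf_embed_pmf_finite_support[OF finite_boolfuns]) (auto simp: is_law_def)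
  show ?thesis
  proof (intro exI conjI allI ballI)
    show "set_pmf (embed_pmf limit_law) \<subseteq> boolfuns k"
      using is_law_outside[OF is_law_limit_law] by (metis pmf_limit set_pmf_iff subsetI)
    show "(\<lambda>m. pmf (F_law k p (2 * m + 1)) f) \<longlonglongrightarrow> pmf (embed_pmf limit_law) f" for f
      using root_law_tendsto[of f] by (simp add: pmf_limit root_law_def)
    show "pmf (embed_pmf limit_law) f > 0" if "f \<in> boolfuns k" for f
      using limit_law_pos[OF that] by (simp add: pmf_limit)
  qed
qed

end
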